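(* Let $(\mathfrak g,[-,-])$ be a Lie algebra and $(\rho,V)$ a representation. Every invertible anti-$\mathcal O$-operator $T:V\to\mathfrak g$ of $(\mathfrak g,[-,-])$ associated to $(\rho,V)$ is strong.
   Context: All vector spaces are finite-dimensional over a field $\mathbb F$ of characteristic $0$. A linear map $T:V\to\mathfrak g$ is an anti-$\mathcal O$-operator associated to a representation $(\rho,V)$ if $[T(u),T(v)]=T(\rho(T(v))u-\rho(T(u))v)$ for all $u,v\in V$; it is strong if moreover $\rho([T(u),T(v)])w+\rho([T(v),T(w)])u+\rho([T(w),T(u)])v=0$ for all $u,v,w\in V$. *)

theory Defs
  imports Complex_Main
begin

definition fin_dim_vs :: "('k::field \<Rightarrow> 'a::ab_group_add \<Rightarrow> 'a) \<Rightarrow> bool" where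
  "fin_dim_vs s \<longleftrightarrow> (\<exists>B. finite_dimensional_vector_space s B)"

definition lie_algebra ::
  "('k::field \<Rightarrow> 'g::ab_group_add \<Rightarrow> 'g) \<Rightarrow> ('g \<Rightarrow> 'g \<Rightarrow> 'g) \<Rightarrow> bool" where
  "lie_algebra sg br \<longleftrightarrow>
     vector_space sg \<and>
     (\<forall>x. Vector_Spaces.linear sg sg (br x)) \<and>
     (\<forall>y. Vector_Spaces.linear sg sg (\<lambda>x. br x y)) \<and>
     (\<forall>x. br x x = 0) \<and>
     (\<forall>x y z. br x (br y z) + br y (br z x) + br z (br x y) = 0)"

definition lie_rep ::
  "('k::field \<Rightarrow> 'g::ab_group_add \<Rightarrow> 'g) \<Rightarrow> ('g \<Rightarrow> 'g \<Rightarrow> 'g) \<Rightarrow>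
   ('k \<Rightarrow> 'v::ab_group_add \<Rightarrow> 'v) \<Rightarrow> ('g \<Rightarrow> 'v \<Rightarrow> 'v) \<Rightarrow> bool" where
  "lie_rep sg br sv rho \<longleftrightarrow>
     vector_space sv \<and>
     (\<forall>x. Vector_Spaces.linear sv sv (rho x)) \<and>
     (\<forall>v. Vector_Spaces.linear sg sv (\<lambda>x. rho x v)) \<and>
     (\<forall>x y v. rho (br x y) v = rho x (rho y v) - rho y (rho x v))"

definition anti_O_operator ::
  "('k::field \<Rightarrow> 'g::ab_group_add \<Rightarrow> 'g) \<Rightarrow> ('g \<Rightarrow> 'g \<Rightarrow> 'g) \<Rightarrow>
   ('k \<Rightarrow> 'v::ab_group_add \<Rightarrow> 'v) \<Rightarrow> ('g \<Rightarrow> 'v \<Rightarrow> 'v) \<Rightarrow> ('v \<Rightarrow> 'g) \<Rightarrow> bool" where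
  "anti_O_operator sg br sv rho T \<longleftrightarrow>
     Vector_Spaces.linear sv sg T \<and>
     (\<forall>u v. br (T u) (T v) = T (rho (T v) u - rho (T u) v))"

definition strong_anti_O_operator ::
  "('k::field \<Rightarrow> 'g::ab_group_add \<Rightarrow> 'g) \<Rightarrow> ('g \<Rightarrow> 'g \<Rightarrow> 'g) \<Rightarrow>
   ('k \<Rightarrow> 'v::ab_group_add \<Rightarrow> 'v) \<Rightarrow> ('g \<Rightarrow> 'v \<Rightarrow> 'v) \<Rightarrow> ('v \<Rightarrow> 'g) \<Rightarrow> bool" where
  "strong_anti_O_operator sg br sv rho T \<longleftrightarrow>
     anti_O_operator sg br sv rho T \<and>
     (\<forall>u v w. rho (br (T u) (T v)) w + rho (br (T v) (T w)) u + rho (br (T w) (T u)) v = 0)"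

end

theory Submission
  imports Defs
begin

text \<open>Applying the anti-\<open>\<O>\<close>-operator identity twice rewrites the Jacobiator of
  \<open>T u, T v, T w\<close> as \<open>T\<close> of an element of \<open>V\<close>; after expanding \<open>\<rho>([T v, T w])\<close> etc. by the
  representation property, this element is twice the cyclic sum in the definition of a strong
  operator. The Jacobi identity makes the Jacobiator vanish, so injectivity of \<open>T\<close> and
  characteristic \<open>0\<close> force the cyclic sum to vanish.\<close>

definition strong_cyclic_sum ::
  "('g \<Rightarrow> 'g \<Rightarrow> 'g) \<Rightarrow> ('g \<Rightarrow> 'v \<Rightarrow> 'v::ab_group_add) \<Rightarrow> ('v \<Rightarrow> 'g) \<Rightarrow> 'v \<Rightarrow> 'v \<Rightarrow> 'v \<Rightarrow> 'v"
  where "strong_cyclic_sum br rho T u v w =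
    rho (br (T u) (T v)) w + rho (br (T v) (T w)) u + rho (br (T w) (T u)) v"

lemma strong_anti_O_operator_iff_cyclic_sum_eq_0:
  "strong_anti_O_operator sg br sv rho T \<longleftrightarrow>
     anti_O_operator sg br sv rho T \<and> (\<forall>u v w. strong_cyclic_sum br rho T u v w = 0)"
  by (simp add: strong_anti_O_operator_def strong_cyclic_sum_def)

lemma vector_space_add_self_eq_0_iff:
  fixes s :: "'k::field_char_0 \<Rightarrow> 'a::ab_group_add \<Rightarrow> 'a"
    and x :: 'a
  assumes "vector_space s"
  shows "x + x = 0 \<longleftrightarrow> x = 0"
proof -
  interpret vector_space s by (rule assms)
  have "x + x = s 2 x"
    using scale_left_distrib[of 1 1 x] by simp
  then show ?thesis
    by simp
qed

lemma anti_O_operator_jacobiator: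
  assumes "lie_rep sg br sv rho" and "anti_O_operator sg br sv rho T"
  shows "br (T u) (br (T v) (T w)) + br (T v) (br (T w) (T u)) + br (T w) (br (T u) (T v)) =
    T (strong_cyclic_sum br rho T u v w + strong_cyclic_sum br rho T u v w)"
proof -
  have rho_hom: "\<And>x. module_hom sv sv (rho x)"
    and rho_bracket: "\<And>x y v. rho (br x y) v = rho x (rho y v) - rho y (rho x v)"
    using assms(1) by (auto simp: lie_rep_def module_hom_iff_linear)
  have T_hom: "module_hom sv sg T"
    and T_bracket: "\<And>u v. br (T u) (T v) = T (rho (T v) u - rho (T u) v)"
    using assms(2) by (auto simp: anti_O_operator_def module_hom_iff_linear)
  have T_double_bracket: "br (T a) (br (T b) (T c)) =
      T (rho (br (T b) (T c)) a - rho (T a) (rho (T c) b - rho (T b) c))" for a b c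
    by (simp only: T_bracket)
  show ?thesis
    unfolding T_double_bracket module_hom.add[OF T_hom, symmetric]
    by (simp add: strong_cyclic_sum_def rho_bracket module_hom.diff[OF rho_hom] algebra_simps)
qed

lemma inj_anti_O_operator_imp_strong:
  fixes sv :: "'k::field_char_0 \<Rightarrow> 'v::ab_group_add \<Rightarrow> 'v"
  assumes "lie_algebra sg br" and "lie_rep sg br sv rho"
    and "anti_O_operator sg br sv rho T" and "inj T"
  shows "strong_anti_O_operator sg br sv rho T"
proof -
  have T_hom: "module_hom sv sg T"
    using assms(3) by (simp add: anti_O_operator_def module_hom_iff_linear)
  have "strong_cyclic_sum br rho T u v w = 0" for u v w
  proof -
    let ?S = "strong_cyclic_sum br rho T u v w"
    have "T (?S + ?S) = T 0"
      using anti_O_operator_jacobiator[OF assms(2,3), of u v w] assms(1)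
      by (simp add: lie_algebra_def module_hom.zero[OF T_hom])
    then have "?S + ?S = 0"
      using \<open>inj T\<close> by (simp add: inj_eq)
    moreover have "vector_space sv"
      using assms(2) by (simp add: lie_rep_def)
    ultimately show ?thesis
      by (simp add: vector_space_add_self_eq_0_iff)
  qed
  then show ?thesis
    using assms(3) by (simp add: strong_anti_O_operator_iff_cyclic_sum_eq_0)
qed

theorem proposition2p17:
  fixes sg :: "'k::field_char_0 \<Rightarrow> 'g::ab_group_add \<Rightarrow> 'g"
    and br :: "'g \<Rightarrow> 'g \<Rightarrow> 'g"
    and sv :: "'k \<Rightarrow> 'v::ab_group_add \<Rightarrow> 'v"
    and rho :: "'g \<Rightarrow> 'v \<Rightarrow> 'v"
    and T :: "'v \<Rightarrow> 'g"
  assumes "fin_dim_vs sg" and "fin_dim_vs sv"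
    and "lie_algebra sg br"
    and "lie_rep sg br sv rho"
    and "anti_O_operator sg br sv rho T"
    and "bij T"
  shows "strong_anti_O_operator sg br sv rho T"
  using inj_anti_O_operator_imp_strong[OF assms(3-5)] bij_is_inj[OF assms(6)] .

end
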